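(* Let $S$ be a commutative semigroup and $H$ a subsemigroup of $S$. Let $\{H_i : i\in I\}$ be a nonempty family ($I\neq\emptyset$) of subsets of $S$ such that $H=\bigcap_{i\in I}\mathrm{Sep}\,H_i$. Then the relation $$P(H;H_i,I)=\{(a,b)\in S\times S:\ H_i\dots a=H_i\dots b \text{ for all } i\in I\}$$ is a monoid congruence on $S$ such that $H$ is a congruence class and is the identity element of the factor semigroup $S/P(H;H_i,I)$. Conversely, for every monoid congruence $p$ on a commutative semigroup $S$ there exist a subsemigroup $H$ of $S$ and a nonempty family $\{H_i: i\in I\}$ of subsets of $S$ with $H=\bigcap_{i\in I}\mathrm{Sep}\,H_i$ such that $p=P(H;H_i,I)$.
   Context: For a semigroup $S$ and $A\subseteq S$, $\mathrm{Sep}\,A$ (the separator of $A$) is the set of all $x\in S$ with $xA\subseteq A$, $Ax\subseteq A$, $x(S\setminus A)\subseteq S\setminus A$ and $(S\setminus A)x\subseteq S\setminus A$. For $A\subseteq S$ and $a\in S$, $A\dots a=\{(x,y)\in S\times S:\ xay\in A\}$. A congruence $p$ on $S$ is a monoid congruence if the factor semigroup $S/p$ is a monoid (has an identity element). *)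

theory Defs
  imports Main
begin

text \<open>The commutative semigroup S is the whole carrier type 'a of class ab_semigroup_mult.\<close>

definition subsemigroup :: "'a::semigroup_mult set \<Rightarrow> bool" where
  "subsemigroup H \<longleftrightarrow> H \<noteq> {} \<and> (\<forall>x\<in>H. \<forall>y\<in>H. x * y \<in> H)"

definition Sep :: "'a::semigroup_mult set \<Rightarrow> 'a set" where
  "Sep A = {x. (\<forall>a\<in>A. x * a \<in> A \<and> a * x \<in> A) \<and>
               (\<forall>a\<in>-A. x * a \<in> -A \<and> a * x \<in> -A)}"

definition dots :: "'a::semigroup_mult set \<Rightarrow> 'a \<Rightarrow> ('a \<times> 'a) set" where
  "dots A a = {(x, y). x * a * y \<in> A}"

definition congruence :: "('a::semigroup_mult \<times> 'a) set \<Rightarrow> bool" where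
  "congruence p \<longleftrightarrow> equiv UNIV p \<and>
     (\<forall>a b c. (a, b) \<in> p \<longrightarrow> (c * a, c * b) \<in> p \<and> (a * c, b * c) \<in> p)"

text \<open>The factor semigroup S/p has an identity element (the class of e).\<close>
definition monoid_congruence :: "('a::semigroup_mult \<times> 'a) set \<Rightarrow> bool" where
  "monoid_congruence p \<longleftrightarrow> congruence p \<and>
     (\<exists>e. \<forall>a. (e * a, a) \<in> p \<and> (a * e, a) \<in> p)"

definition identity_class :: "('a::semigroup_mult \<times> 'a) set \<Rightarrow> 'a set \<Rightarrow> bool" where
  "identity_class p H \<longleftrightarrow> H \<in> UNIV // p \<and>
     (\<forall>h\<in>H. \<forall>a. (h * a, a) \<in> p \<and> (a * h, a) \<in> p)"

definition Prel :: "'a::semigroup_mult set \<Rightarrow> ('i \<Rightarrow> 'a set) \<Rightarrow> 'i set \<Rightarrow> ('a \<times> 'a) set" where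
  "Prel H Hs I = {(a, b). \<forall>i\<in>I. dots (Hs i) a = dots (Hs i) b}"

end

theory Submission
  imports Defs
begin

(* In a commutative semigroup an element h of every separator Sep (Hs i) can be pulled out of
   any context, x * (h * a) * y = h * (x * a * y), and it neither enters nor leaves Hs i; so h * a
   is P-equivalent to a, and H is a single class acting as identity.  Conversely, an element b
   equivalent to some h0 in H separates every Hs i, since h0 * h0 * z and h0 * b * z lie in Hs i
   together.  For a monoid congruence p with identity e, take as family all classes of p and as H
   the class of e: contexts x * _ * y preserve classes, and the context e * _ * e recovers the
   class of an element itself. *)

lemma dots_eq_iff: "dots A a = dots A b \<longleftrightarrow> (\<forall>x y. x * a * y \<in> A \<longleftrightarrow> x * b * y \<in> A)"
  unfolding dots_def by (auto simp: set_eq_iff)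

lemma mem_Prel_iff:
  "(a, b) \<in> Prel H Hs I \<longleftrightarrow> (\<forall>i\<in>I. \<forall>x y. x * a * y \<in> Hs i \<longleftrightarrow> x * b * y \<in> Hs i)"
  unfolding Prel_def by (simp add: dots_eq_iff)

lemma Sep_mult_left_iff: "h \<in> Sep A \<Longrightarrow> h * z \<in> A \<longleftrightarrow> z \<in> A"
  unfolding Sep_def by auto

lemma congruence_refl: "congruence p \<Longrightarrow> (a, a) \<in> p"
  unfolding congruence_def equiv_def refl_on_def by blast

lemma congruence_sym: "congruence p \<Longrightarrow> (a, b) \<in> p \<Longrightarrow> (b, a) \<in> p"
  unfolding congruence_def equiv_def sym_def by blast

lemma congruence_trans: "congruence p \<Longrightarrow> (a, b) \<in> p \<Longrightarrow> (b, c) \<in> p \<Longrightarrow> (a, c) \<in> p"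
  unfolding congruence_def equiv_def trans_def by blast

lemma congruence_mult:
  assumes "congruence p" "(a, b) \<in> p" "(c, d) \<in> p"
  shows "(a * c, b * d) \<in> p"
proof -
  from assms have "(a * c, b * c) \<in> p" "(b * c, b * d) \<in> p"
    unfolding congruence_def by blast+
  with assms(1) show ?thesis
    by (rule congruence_trans)
qed

lemma congruence_class_iff:
  assumes "congruence p" "C \<in> UNIV // p" "(a, b) \<in> p"
  shows "a \<in> C \<longleftrightarrow> b \<in> C"
proof -
  have "equiv UNIV p" and "(b, a) \<in> p"
    using assms congruence_sym unfolding congruence_def by blast+
  then show ?thesis
    using assms(2,3) in_quotient_imp_closed by metis
qed

lemma congruence_Prel: "congruence (Prel H Hs I)"
proof -
  have "equiv UNIV (Prel H Hs I)"
    by (rule equivI) (auto simp: refl_on_def sym_def trans_def mem_Prel_iff)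
  moreover have "(c * a, c * b) \<in> Prel H Hs I" "(a * c, b * c) \<in> Prel H Hs I"
    if "(a, b) \<in> Prel H Hs I" for a b c
  proof -
    have "x * (c * a) * y = (x * c) * a * y" "x * (a * c) * y = x * a * (c * y)" for x y
      by (simp_all add: mult.assoc)
    moreover have "x * (c * b) * y = (x * c) * b * y" "x * (b * c) * y = x * b * (c * y)" for x y
      by (simp_all add: mult.assoc)
    ultimately show "(c * a, c * b) \<in> Prel H Hs I" "(a * c, b * c) \<in> Prel H Hs I"
      using that unfolding mem_Prel_iff by metis+
  qed
  ultimately show ?thesis
    unfolding congruence_def by blast
qed

lemma Prel_mult_Sep:
  fixes h :: "'a::ab_semigroup_mult"
  assumes "h \<in> (\<Inter>i\<in>I. Sep (Hs i))"
  shows "(h * a, a) \<in> Prel H Hs I" and "(a * h, a) \<in> Prel H Hs I"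
proof -
  show "(h * a, a) \<in> Prel H Hs I" for a
    unfolding mem_Prel_iff
  proof (intro ballI allI)
    fix i x y
    assume "i \<in> I"
    with assms have "h \<in> Sep (Hs i)" by blast
    moreover have "x * (h * a) * y = h * (x * a * y)" by (simp add: ac_simps)
    ultimately show "x * (h * a) * y \<in> Hs i \<longleftrightarrow> x * a * y \<in> Hs i"
      by (simp add: Sep_mult_left_iff)
  qed
  then show "(a * h, a) \<in> Prel H Hs I"
    by (simp add: mult.commute)
qed

lemma Prel_Image_Sep:
  fixes h0 :: "'a::ab_semigroup_mult"
  assumes h0: "h0 \<in> (\<Inter>i\<in>I. Sep (Hs i))"
  shows "Prel H Hs I `` {h0} = (\<Inter>i\<in>I. Sep (Hs i))"
proof
  show "(\<Inter>i\<in>I. Sep (Hs i)) \<subseteq> Prel H Hs I `` {h0}"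
  proof
    fix h
    assume h: "h \<in> (\<Inter>i\<in>I. Sep (Hs i))"
    have "(h0, h0 * h) \<in> Prel H Hs I"
      by (rule congruence_sym[OF congruence_Prel Prel_mult_Sep(2)[OF h]])
    then have "(h0, h) \<in> Prel H Hs I"
      by (rule congruence_trans[OF congruence_Prel _ Prel_mult_Sep(1)[OF h0]])
    then show "h \<in> Prel H Hs I `` {h0}" by simp
  qed
  show "Prel H Hs I `` {h0} \<subseteq> (\<Inter>i\<in>I. Sep (Hs i))"
  proof (intro subsetI INT_I)
    fix b i
    assume "b \<in> Prel H Hs I `` {h0}" and i: "i \<in> I"
    then have b: "(h0, b) \<in> Prel H Hs I" by simp
    from h0 i have s: "h0 \<in> Sep (Hs i)" by blast
    have "b * z \<in> Hs i \<longleftrightarrow> z \<in> Hs i" for z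
    proof -
      have "b * z \<in> Hs i \<longleftrightarrow> h0 * b * z \<in> Hs i"
        using Sep_mult_left_iff[OF s, of "b * z"] by (simp add: mult.assoc)
      also have "\<dots> \<longleftrightarrow> h0 * h0 * z \<in> Hs i"
        using b i unfolding mem_Prel_iff by blast
      also have "\<dots> \<longleftrightarrow> z \<in> Hs i"
        using Sep_mult_left_iff[OF s, of "h0 * z"] Sep_mult_left_iff[OF s, of z]
        by (simp add: mult.assoc)
      finally show ?thesis .
    qed
    then show "b \<in> Sep (Hs i)"
      unfolding Sep_def by (auto simp: mult.commute)
  qed
qed

lemma monoid_congruence_Prel:
  fixes H :: "'a::ab_semigroup_mult set"
  assumes "H = (\<Inter>i\<in>I. Sep (Hs i))" "H \<noteq> {}"
  shows "monoid_congruence (Prel H Hs I)"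
proof -
  from assms obtain h0 where "h0 \<in> (\<Inter>i\<in>I. Sep (Hs i))" by blast
  then have "(h0 * a, a) \<in> Prel H Hs I \<and> (a * h0, a) \<in> Prel H Hs I" for a
    by (simp add: Prel_mult_Sep)
  with congruence_Prel show ?thesis
    unfolding monoid_congruence_def by blast
qed

lemma identity_class_Prel:
  fixes H :: "'a::ab_semigroup_mult set"
  assumes H: "H = (\<Inter>i\<in>I. Sep (Hs i))" "H \<noteq> {}"
  shows "identity_class (Prel H Hs I) H"
proof -
  from H obtain h0 where h0: "h0 \<in> (\<Inter>i\<in>I. Sep (Hs i))" by blast
  have "H \<in> UNIV // Prel H Hs I"
    using quotientI[of h0 UNIV "Prel H Hs I"] Prel_Image_Sep[OF h0] H(1) by simp
  moreover have "(h * a, a) \<in> Prel H Hs I \<and> (a * h, a) \<in> Prel H Hs I" if "h \<in> H" for h a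
    using that H(1) by (simp add: Prel_mult_Sep)
  ultimately show ?thesis
    unfolding identity_class_def by blast
qed

lemma Prel_classes:
  assumes cong: "congruence p"
    and e: "\<And>a. (e * a, a) \<in> p" "\<And>a. (a * e, a) \<in> p"
  shows "Prel H id (UNIV // p) = p"
proof (intro equalityI subrelI)
  fix a b
  show "(a, b) \<in> Prel H id (UNIV // p)" if ab: "(a, b) \<in> p"
    unfolding mem_Prel_iff id_apply
  proof (intro ballI allI)
    fix C x y
    assume C: "C \<in> UNIV // p"
    have "(x * a, x * b) \<in> p"
      by (rule congruence_mult[OF cong congruence_refl[OF cong] ab])
    then have "(x * a * y, x * b * y) \<in> p"
      by (rule congruence_mult[OF cong _ congruence_refl[OF cong]])
    then show "x * a * y \<in> C \<longleftrightarrow> x * b * y \<in> C"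
      by (rule congruence_class_iff[OF cong C])
  qed
  show "(a, b) \<in> p" if ab: "(a, b) \<in> Prel H id (UNIV // p)"
  proof -
    have ece: "(e * c * e, c) \<in> p" for c
      using congruence_trans[OF cong e(2) e(1)] .
    define C where "C = p `` {e * a * e}"
    have "C \<in> UNIV // p"
      unfolding C_def by (rule quotientI) simp
    then have "e * a * e \<in> C \<longleftrightarrow> e * b * e \<in> C"
      using ab by (simp add: mem_Prel_iff)
    then have "(e * a * e, e * b * e) \<in> p"
      by (simp add: C_def congruence_refl[OF cong])
    then have "(a, e * b * e) \<in> p"
      by (rule congruence_trans[OF cong congruence_sym[OF cong ece]])
    then show ?thesis
      by (rule congruence_trans[OF cong _ ece])
  qed
qed

lemma Sep_classes:
  assumes cong: "congruence p"
    and e: "\<And>a. (e * a, a) \<in> p" "\<And>a. (a * e, a) \<in> p"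
  shows "(\<Inter>C\<in>UNIV // p. Sep C) = p `` {e}"
proof
  show "p `` {e} \<subseteq> (\<Inter>C\<in>UNIV // p. Sep C)"
  proof (intro subsetI INT_I)
    fix h C
    assume "h \<in> p `` {e}" and C: "C \<in> UNIV // p"
    then have "(h, e) \<in> p"
      using congruence_sym[OF cong] by blast
    then have "(h * a, e * a) \<in> p" "(a * h, a * e) \<in> p" for a
      using congruence_mult[OF cong] congruence_refl[OF cong] by blast+
    then have "(h * a, a) \<in> p" "(a * h, a) \<in> p" for a
      using e congruence_trans[OF cong] by blast+
    then have "h * a \<in> C \<longleftrightarrow> a \<in> C" "a * h \<in> C \<longleftrightarrow> a \<in> C" for a
      using congruence_class_iff[OF cong C] by blast+
    then show "h \<in> Sep C"
      unfolding Sep_def by auto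
  qed
  show "(\<Inter>C\<in>UNIV // p. Sep C) \<subseteq> p `` {e}"
  proof
    fix h
    assume "h \<in> (\<Inter>C\<in>UNIV // p. Sep C)"
    then have "h \<in> Sep (p `` {e})"
      using quotientI[of e UNIV p] by blast
    moreover have "e \<in> p `` {e}"
      using congruence_refl[OF cong] by blast
    ultimately have "(e, h * e) \<in> p"
      using Sep_mult_left_iff by blast
    with e show "h \<in> p `` {e}"
      using congruence_trans[OF cong] by blast
  qed
qed

lemma subsemigroup_identity_class:
  assumes cong: "congruence p"
    and e: "\<And>a. (e * a, a) \<in> p"
  shows "subsemigroup (p `` {e})"
  unfolding subsemigroup_def
proof (intro conjI ballI)
  show "p `` {e} \<noteq> {}"
    using congruence_refl[OF cong] by blast
  fix x y
  assume "x \<in> p `` {e}" "y \<in> p `` {e}"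
  then have "(e * e, x * y) \<in> p"
    using congruence_mult[OF cong] by blast
  with e show "x * y \<in> p `` {e}"
    using congruence_sym[OF cong] congruence_trans[OF cong] by blast
qed

theorem theorem3:
  shows "(\<forall>(H::'a::ab_semigroup_mult set) (Hs :: 'i \<Rightarrow> 'a set) I.
            subsemigroup H \<and> I \<noteq> {} \<and> H = (\<Inter>i\<in>I. Sep (Hs i)) \<longrightarrow>
            monoid_congruence (Prel H Hs I) \<and> identity_class (Prel H Hs I) H)
       \<and> (\<forall>p :: ('a \<times> 'a) set. monoid_congruence p \<longrightarrow>
            (\<exists>H (Hs :: 'a set \<Rightarrow> 'a set) (I :: 'a set set).
               subsemigroup H \<and> I \<noteq> {} \<and> H = (\<Inter>i\<in>I. Sep (Hs i)) \<and> p = Prel H Hs I))"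
proof (rule conjI; intro allI impI)
  fix H :: "'a set" and Hs :: "'i \<Rightarrow> 'a set" and I
  assume "subsemigroup H \<and> I \<noteq> {} \<and> H = (\<Inter>i\<in>I. Sep (Hs i))"
  then have H: "H = (\<Inter>i\<in>I. Sep (Hs i))" "H \<noteq> {}"
    unfolding subsemigroup_def by auto
  show "monoid_congruence (Prel H Hs I) \<and> identity_class (Prel H Hs I) H"
    using monoid_congruence_Prel[OF H] identity_class_Prel[OF H] ..
next
  fix p :: "('a \<times> 'a) set"
  assume "monoid_congruence p"
  then obtain e where cong: "congruence p" and e: "\<And>a. (e * a, a) \<in> p" "\<And>a. (a * e, a) \<in> p"
    unfolding monoid_congruence_def by blast
  have "subsemigroup (p `` {e})"
    using subsemigroup_identity_class[OF cong e(1)] .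
  moreover have "UNIV // p \<noteq> {}"
    unfolding quotient_def by blast
  moreover have "p `` {e} = (\<Inter>C\<in>UNIV // p. Sep (id C))"
    using Sep_classes[OF cong e] by simp
  moreover have "p = Prel (p `` {e}) id (UNIV // p)"
    using Prel_classes[OF cong e] by simp
  ultimately show "\<exists>H (Hs :: 'a set \<Rightarrow> 'a set) (I :: 'a set set).
      subsemigroup H \<and> I \<noteq> {} \<and> H = (\<Inter>i\<in>I. Sep (Hs i)) \<and> p = Prel H Hs I"
    by (intro exI conjI)
qed

end
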